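(* Let $T$ be a permutation tableau, and let $i\neq j$ be two labels of $T$, each of which labels a dot (i.e. each is either a column label or the label of a restricted row). Then $i$ lies to the left of $j$ in $\xi(T)$ if and only if either $P_i<P_j$, or $P_j$ is contained in $P_i$.
   Context: Permutation tableaux. Draw a Ferrers diagram in English convention: rows are left-justified, row lengths weakly decrease from top to bottom, and every column is nonempty. Rows of length zero are allowed. A permutation tableau $T$ is a filling of the cells of such a diagram with 0's and 1's satisfying two conditions: (i) every column contains at least one 1; (ii) no cell containing 0 has both a 1 above it in its column and a 1 to its left in its row. Its length $n$ is the number of rows plus the number of columns. Labels. The southeast boundary path of $n$ unit south/west steps, from the top-right corner to the bottom-left corner, has its steps labeled $1,\ldots,n$ in order. Each row gets the label of its south step, and each column the label of its west step. $(i,j)$ denotes the cell in row $i$ and column $j$. Zeros, ones and rows. A 1 is topmost if there is no 1 above it in its column. A 0 is restricted if there is a 1 above it in its column. A rightmost restricted 0 is a restricted 0 with no restricted 0 to its right in its row. A row is unrestricted if it contains no restricted 0; empty rows are unrestricted. Dots. Black dots are placed on the topmost 1's (one per column), each labeled by its column label. White dots are placed on the rightmost restricted 0's (one per restricted row), each labeled by its row label. Alternating paths. An alternating path is a sequence of dots, identified with the sequence of their labels, built as follows. - From a white dot in cell $(i,j)$, the next dot is the black dot of column $j$. - From a black dot in cell $(i,j)$: if row $i$ is unrestricted, the path ends; otherwise the next dot is the white dot of row $i$. For a label $k$ of a dot, $P_k$ is the alternating path starting at that dot. $P_k$ is contained in a path $P$ if $k$ is the label of a dot of $P$; then $P_k$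 is a final segment of $P$. Order on paths. Let $P_a,P_b$ be two such paths, neither contained in the other. Remove their longest common final segment (nothing is removed if they share no dot), obtaining nonempty paths $P'_a,P'_b$. Define $P_a>P_b$ if the last dot of $P'_a$ lies in a row strictly below the last dot of $P'_b$, or in the same row and strictly to its right. Otherwise $P_a<P_b$. The bijection $\xi$. Start with the labels of the unrestricted rows in increasing order. Then process the column labels in decreasing order. For a column $j$: 1. If its black dot is in cell $(i,j)$, insert $j$ immediately to the left of $i$. 2. If column $j$ has white dots in rows $i_1<\cdots<i_k$, insert $i_1\cdots i_k$, in increasing order, immediately to the left of $j$. The result is the permutation $\xi(T)$ of $[n]$. *)

theory Defs
  imports Main
begin

text \<open>
The southeast boundary path has steps labelled 1..n; R is the set of labels of
south steps (= row labels); the remaining labels in {1..n} are column labels.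
Row i contains a cell in column j iff i is a row label, j a column label and i < j
(the west step j comes after the south step i on the path).
Row i is above row i' iff i < i'; column j is to the left of column j' iff j > j'.
The filling is f :: nat => nat => bool (True = 1, False = 0); only its values on
cells matter.
\<close>

definition cols :: "nat \<Rightarrow> nat set \<Rightarrow> nat set" where
  "cols n R = {1..n} - R"

definition is_cell :: "nat \<Rightarrow> nat set \<Rightarrow> nat \<Rightarrow> nat \<Rightarrow> bool" where
  "is_cell n R i j \<longleftrightarrow> i \<in> R \<and> j \<in> cols n R \<and> i < j"

definition perm_tableau :: "nat \<Rightarrow> nat set \<Rightarrow> (nat \<Rightarrow> nat \<Rightarrow> bool) \<Rightarrow> bool" where
  "perm_tableau n R f \<longleftrightarrow>
     R \<subseteq> {1..n} \<and>
     (\<forall>j \<in> cols n R. \<exists>i. is_cell n R i j \<and> f i j) \<and>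
     (\<forall>i j. is_cell n R i j \<and> \<not> f i j \<longrightarrow>
        \<not> ((\<exists>i'. i' < i \<and> is_cell n R i' j \<and> f i' j) \<and>
           (\<exists>j'. j' > j \<and> is_cell n R i j' \<and> f i j')))"

definition topmost1 :: "nat \<Rightarrow> nat set \<Rightarrow> (nat \<Rightarrow> nat \<Rightarrow> bool) \<Rightarrow> nat \<Rightarrow> nat \<Rightarrow> bool" where
  "topmost1 n R f i j \<longleftrightarrow> is_cell n R i j \<and> f i j \<and>
     \<not> (\<exists>i'. i' < i \<and> is_cell n R i' j \<and> f i' j)"

definition restricted0 :: "nat \<Rightarrow> nat set \<Rightarrow> (nat \<Rightarrow> nat \<Rightarrow> bool) \<Rightarrow> nat \<Rightarrow> nat \<Rightarrow> bool" where
  "restricted0 n R f i j \<longleftrightarrow> is_cell n R i j \<and> \<not> f i j \<and>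
     (\<exists>i'. i' < i \<and> is_cell n R i' j \<and> f i' j)"

text \<open>A restricted 0 with no restricted 0 to its right (i.e. in a column with smaller label).\<close>
definition rightmost_r0 :: "nat \<Rightarrow> nat set \<Rightarrow> (nat \<Rightarrow> nat \<Rightarrow> bool) \<Rightarrow> nat \<Rightarrow> nat \<Rightarrow> bool" where
  "rightmost_r0 n R f i j \<longleftrightarrow> restricted0 n R f i j \<and>
     \<not> (\<exists>j'. j' < j \<and> restricted0 n R f i j')"

definition restricted_row :: "nat \<Rightarrow> nat set \<Rightarrow> (nat \<Rightarrow> nat \<Rightarrow> bool) \<Rightarrow> nat \<Rightarrow> bool" where
  "restricted_row n R f i \<longleftrightarrow> i \<in> R \<and> (\<exists>j. restricted0 n R f i j)"

definition unrestricted_row :: "nat \<Rightarrow> nat set \<Rightarrow> (nat \<Rightarrow> nat \<Rightarrow> bool) \<Rightarrow> nat \<Rightarrow> bool" where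
  "unrestricted_row n R f i \<longleftrightarrow> i \<in> R \<and> \<not> (\<exists>j. restricted0 n R f i j)"

text \<open>Labels of dots: column labels (black dots) and labels of restricted rows (white dots).\<close>
definition dot_labels :: "nat \<Rightarrow> nat set \<Rightarrow> (nat \<Rightarrow> nat \<Rightarrow> bool) \<Rightarrow> nat set" where
  "dot_labels n R f = cols n R \<union> {i. restricted_row n R f i}"

definition top1 :: "nat \<Rightarrow> nat set \<Rightarrow> (nat \<Rightarrow> nat \<Rightarrow> bool) \<Rightarrow> nat \<Rightarrow> nat" where
  "top1 n R f j = (THE i. topmost1 n R f i j)"

definition rr0 :: "nat \<Rightarrow> nat set \<Rightarrow> (nat \<Rightarrow> nat \<Rightarrow> bool) \<Rightarrow> nat \<Rightarrow> nat" where
  "rr0 n R f i = (THE j. rightmost_r0 n R f i j)"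

definition dot_pos :: "nat \<Rightarrow> nat set \<Rightarrow> (nat \<Rightarrow> nat \<Rightarrow> bool) \<Rightarrow> nat \<Rightarrow> nat \<times> nat" where
  "dot_pos n R f k = (if k \<in> cols n R then (top1 n R f k, k) else (k, rr0 n R f k))"

text \<open>Next dot on an alternating path (None = the path ends).\<close>
definition nxt :: "nat \<Rightarrow> nat set \<Rightarrow> (nat \<Rightarrow> nat \<Rightarrow> bool) \<Rightarrow> nat \<Rightarrow> nat option" where
  "nxt n R f k = (if k \<in> cols n R then
       (if restricted_row n R f (top1 n R f k) then Some (top1 n R f k) else None)
     else Some (rr0 n R f k))"

definition is_alt_path :: "nat \<Rightarrow> nat set \<Rightarrow> (nat \<Rightarrow> nat \<Rightarrow> bool) \<Rightarrow> nat \<Rightarrow> nat list \<Rightarrow> bool" where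
  "is_alt_path n R f k ps \<longleftrightarrow> ps \<noteq> [] \<and> hd ps = k \<and>
     (\<forall>m. Suc m < length ps \<longrightarrow> nxt n R f (ps ! m) = Some (ps ! Suc m)) \<and>
     nxt n R f (last ps) = None"

text \<open>P_k: the alternating path starting at the dot labelled k, as its list of labels.\<close>
definition alt_path :: "nat \<Rightarrow> nat set \<Rightarrow> (nat \<Rightarrow> nat \<Rightarrow> bool) \<Rightarrow> nat \<Rightarrow> nat list" where
  "alt_path n R f k = (THE ps. is_alt_path n R f k ps)"

definition common_suffix_len :: "'a list \<Rightarrow> 'a list \<Rightarrow> nat" where
  "common_suffix_len xs ys = (GREATEST c. c \<le> length xs \<and> c \<le> length ys \<and>
      drop (length xs - c) xs = drop (length ys - c) ys)"

text \<open>P_a > P_b (for paths neither contained in the other).\<close>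
definition path_greater :: "nat \<Rightarrow> nat set \<Rightarrow> (nat \<Rightarrow> nat \<Rightarrow> bool) \<Rightarrow> nat \<Rightarrow> nat \<Rightarrow> bool" where
  "path_greater n R f a b \<longleftrightarrow>
     (let pa = alt_path n R f a; pb = alt_path n R f b;
          c = common_suffix_len pa pb;
          la = dot_pos n R f (last (take (length pa - c) pa));
          lb = dot_pos n R f (last (take (length pb - c) pb))
      in fst la > fst lb \<or> (fst la = fst lb \<and> snd la < snd lb))"

definition path_less :: "nat \<Rightarrow> nat set \<Rightarrow> (nat \<Rightarrow> nat \<Rightarrow> bool) \<Rightarrow> nat \<Rightarrow> nat \<Rightarrow> bool" where
  "path_less n R f a b \<longleftrightarrow>
     a \<notin> set (alt_path n R f b) \<and> b \<notin> set (alt_path n R f a) \<and>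
     \<not> path_greater n R f a b"

definition ins_left :: "'a list \<Rightarrow> 'a \<Rightarrow> 'a list \<Rightarrow> 'a list" where
  "ins_left ws y xs = takeWhile (\<lambda>z. z \<noteq> y) xs @ ws @ dropWhile (\<lambda>z. z \<noteq> y) xs"

definition xi_step :: "nat \<Rightarrow> nat set \<Rightarrow> (nat \<Rightarrow> nat \<Rightarrow> bool) \<Rightarrow> nat list \<Rightarrow> nat \<Rightarrow> nat list" where
  "xi_step n R f xs j =
     (let xs1 = ins_left [j] (top1 n R f j) xs
      in ins_left (sorted_list_of_set {i. rightmost_r0 n R f i j}) j xs1)"

definition xi :: "nat \<Rightarrow> nat set \<Rightarrow> (nat \<Rightarrow> nat \<Rightarrow> bool) \<Rightarrow> nat list" where
  "xi n R f = foldl (xi_step n R f)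
     (sorted_list_of_set {i. unrestricted_row n R f i})
     (rev (sorted_list_of_set (cols n R)))"

end

theory Submission
  imports Defs
begin

(*
  The dots of a permutation tableau form a forest: the parent of a dot is
  the next dot on its alternating path, and a path that ends in a black dot of an
  unrestricted row i is attached to the root i.  Thus P_k is the chain of dots from k
  towards its root, and "P_j is contained in P_i" says that j is a proper ancestor of i.

  The map xi builds its word by repeatedly inserting a new leaf immediately to the left
  of its parent, and every new leaf ranks after all siblings that are already present.
  An abstract lemma about such insertions (locale forest) shows that the word then lists
  x before y exactly when y is a proper ancestor of x, or the branches of x and y split
  at two siblings a, b with a ranked before b ("tree_before").  It remains to check that
  the comparison of alternating paths is exactly this sibling comparison: the last dots
  of P_i and P_j before their common final segment are such a pair of siblings.
*)

section \<open>Words: relative order, insertion, common suffixes\<close>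

definition before :: "'a list \<Rightarrow> 'a \<Rightarrow> 'a \<Rightarrow> bool" where
  "before xs x y \<longleftrightarrow> (\<exists>us vs ws. xs = us @ x # vs @ y # ws)"

lemma before_Nil [simp]: "\<not> before [] x y"
  by (auto simp: before_def)

lemma before_Cons [simp]: "before (a # xs) x y \<longleftrightarrow> (x = a \<and> y \<in> set xs) \<or> before xs x y"
proof
  assume "before (a # xs) x y"
  then obtain us vs ws where e: "a # xs = us @ x # vs @ y # ws"
    by (auto simp: before_def)
  then show "(x = a \<and> y \<in> set xs) \<or> before xs x y"
    by (cases us) (auto simp: before_def)
next
  assume "(x = a \<and> y \<in> set xs) \<or> before xs x y"
  then show "before (a # xs) x y"
  proof
    assume h: "x = a \<and> y \<in> set xs"
    then obtain vs ws where "xs = vs @ y # ws" by (meson split_list)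
    then have "a # xs = [] @ x # vs @ y # ws" using h by simp
    then show ?thesis unfolding before_def by blast
  next
    assume "before xs x y"
    then obtain us vs ws where "xs = us @ x # vs @ y # ws" by (auto simp: before_def)
    then have "a # xs = (a # us) @ x # vs @ y # ws" by simp
    then show ?thesis unfolding before_def by blast
  qed
qed

lemma before_append:
  "before (xs @ ys) x y \<longleftrightarrow> before xs x y \<or> before ys x y \<or> (x \<in> set xs \<and> y \<in> set ys)"
  by (induction xs) auto

lemma before_set: "before xs x y \<Longrightarrow> x \<in> set xs \<and> y \<in> set xs"
  by (induction xs) auto

lemma before_antisym: "distinct xs \<Longrightarrow> before xs x y \<Longrightarrow> before xs y x \<Longrightarrow> False"
  by (induction xs) (auto dest: before_set)

lemma before_irrefl: "distinct xs \<Longrightarrow> \<not> before xs x x"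
  using before_antisym by fastforce

lemma before_sorted:
  "sorted_wrt (<) xs \<Longrightarrow> before xs x y \<longleftrightarrow> x \<in> set xs \<and> y \<in> set xs \<and> (x::'a::linorder) < y"
  by (induction xs) auto

lemma ins_left_split: "p \<notin> set T \<Longrightarrow> ins_left ws p (T @ p # Rest) = T @ ws @ p # Rest"
  by (induction T) (auto simp: ins_left_def)

lemma ins_left_absent: "y \<notin> set xs \<Longrightarrow> ins_left ws y xs = xs @ ws"
  by (induction xs) (auto simp: ins_left_def)

lemma ins_left_append:
  assumes "y \<notin> set ws"
  shows "ins_left (ws @ vs) y xs = ins_left vs y (ins_left ws y xs)"
proof (cases "y \<in> set xs")
  case True
  then obtain T Rest where "xs = T @ y # Rest" "y \<notin> set T" by (meson split_list_first)
  then show ?thesis using assms by (simp add: ins_left_split flip: append_assoc)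
next
  case False
  then show ?thesis using assms by (simp add: ins_left_absent)
qed

lemma before_ins_left:
  assumes dist: "distinct xs" and p: "p \<in> set xs" and k: "k \<notin> set xs"
  shows "distinct (ins_left [k] p xs)" "set (ins_left [k] p xs) = insert k (set xs)"
    and "x \<noteq> k \<Longrightarrow> y \<noteq> k \<Longrightarrow> before (ins_left [k] p xs) x y \<longleftrightarrow> before xs x y"
    and "y \<in> set xs \<Longrightarrow> before (ins_left [k] p xs) k y \<longleftrightarrow> y = p \<or> before xs p y"
    and "y \<in> set xs \<Longrightarrow> before (ins_left [k] p xs) y k \<longleftrightarrow> before xs y p"
proof -
  obtain T Rest where xs: "xs = T @ p # Rest" "p \<notin> set T"
    using p by (metis split_list_first)
  then have new: "ins_left [k] p xs = T @ k # p # Rest" by (simp add: ins_left_split)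
  have fresh: "k \<notin> set T" "k \<noteq> p" "k \<notin> set Rest" "p \<notin> set Rest"
    using xs k dist by auto
  show "distinct (ins_left [k] p xs)" using dist xs fresh new by auto
  show "set (ins_left [k] p xs) = insert k (set xs)" using xs new by auto
  show "x \<noteq> k \<Longrightarrow> y \<noteq> k \<Longrightarrow> before (ins_left [k] p xs) x y \<longleftrightarrow> before xs x y"
    using xs new by (simp add: before_append)
  show "y \<in> set xs \<Longrightarrow> before (ins_left [k] p xs) k y \<longleftrightarrow> y = p \<or> before xs p y"
    using xs new fresh k by (auto simp: before_append dest: before_set)
  show "y \<in> set xs \<Longrightarrow> before (ins_left [k] p xs) y k \<longleftrightarrow> before xs y p"
    using xs new fresh k by (auto simp: before_append dest: before_set)
qed

text \<open>Inserting a word to the left of y is inserting its letters one at a time; this lets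
  the white dots of a column be added to the word one by one.\<close>
lemma ins_left_foldl: "y \<notin> set ws \<Longrightarrow> ins_left ws y xs = foldl (\<lambda>xs w. ins_left [w] y xs) xs ws"
proof (induction ws rule: rev_induct)
  case Nil then show ?case by (simp add: ins_left_def)
next
  case (snoc w ws) then show ?case by (simp add: ins_left_append)
qed

lemma decreasing_Cons:
  fixes C :: "'a::linorder set"
  assumes sorted: "sorted_wrt (>) (j # cs)" and elems: "set (j # cs) = {x \<in> C. x \<le> c}"
  shows "j \<in> C" "set cs = {x \<in> C. x < j}" "\<And>x. x \<in> C \<Longrightarrow> c < x \<longleftrightarrow> j < x"
proof -
  have smaller: "\<And>x. x \<in> set cs \<Longrightarrow> x < j" using sorted by simp
  have listed: "x \<in> set (j # cs) \<longleftrightarrow> x \<in> C \<and> x \<le> c" for x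
    using elems by blast
  show "j \<in> C" using listed[of j] by simp
  have "j \<le> c" using listed[of j] by simp
  show "set cs = {x \<in> C. x < j}"
  proof (intro set_eqI iffI)
    fix x assume "x \<in> set cs"
    then show "x \<in> {x \<in> C. x < j}" using listed[of x] smaller[of x] by simp
  next
    fix x assume "x \<in> {x \<in> C. x < j}"
    then show "x \<in> set cs" using listed[of x] \<open>j \<le> c\<close> by auto
  qed
  show "c < x \<longleftrightarrow> j < x" if "x \<in> C" for x
    using that listed[of x] listed[of j] smaller[of x] by (auto simp: not_le)
qed

lemma common_suffix_split:
  obtains xs' ys' zs where "xs = xs' @ zs" "ys = ys' @ zs"
    "common_suffix_len xs ys = length zs"
    "xs' \<noteq> [] \<Longrightarrow> ys' \<noteq> [] \<Longrightarrow> last xs' \<noteq> last ys'"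
proof -
  let ?P = "\<lambda>c. c \<le> length xs \<and> c \<le> length ys \<and> drop (length xs - c) xs = drop (length ys - c) ys"
  define c where "c = common_suffix_len xs ys"
  have bound: "\<And>c. ?P c \<Longrightarrow> c \<le> length xs" by simp
  have "?P 0" by simp
  then have Pc: "?P c"
    unfolding c_def common_suffix_len_def by (rule GreatestI_nat[where P = ?P, OF _ bound])
  define zs where "zs = drop (length xs - c) xs"
  define xs' where "xs' = take (length xs - c) xs"
  define ys' where "ys' = take (length ys - c) ys"
  have xs: "xs = xs' @ zs" and ys: "ys = ys' @ zs" and len: "c = length zs"
    using Pc by (simp_all add: xs'_def ys'_def zs_def) (metis append_take_drop_id)
  have "last xs' \<noteq> last ys'" if ne: "xs' \<noteq> []" "ys' \<noteq> []"
  proof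
    assume eq: "last xs' = last ys'"
    have "xs' = butlast xs' @ [last xs']" "ys' = butlast ys' @ [last ys']"
      using ne by simp_all
    then have "xs = butlast xs' @ last xs' # zs" "ys = butlast ys' @ last xs' # zs"
      using xs ys eq by (metis append.assoc append_Cons append_Nil)+
    then have "?P (Suc c)" using len by auto
    then have "Suc c \<le> c"
      unfolding c_def common_suffix_len_def by (rule Greatest_le_nat[where P = ?P, OF _ bound])
    then show False by simp
  qed
  then show ?thesis using that xs ys len c_def by blast
qed

section \<open>Growing a linear extension of a forest by leaves\<close>

text \<open>An abstract forest: the non-root nodes D have parents par, the roots U are disjoint
  from D and ordered by <, and siblings in D are ranked by sib_gt.  A height that drops
  from each node to its parent makes the parent relation acyclic.\<close>
locale forest =
  fixes D U :: "nat set" and par :: "nat \<Rightarrow> nat" and sib_gt :: "nat \<Rightarrow> nat \<Rightarrow> bool"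
    and height :: "nat \<Rightarrow> nat"
  assumes roots_disjoint: "D \<inter> U = {}"
    and height_par: "k \<in> D \<Longrightarrow> height (par k) < height k"
begin

definition up :: "(nat \<times> nat) set" where
  "up = {(k, par k) | k. k \<in> D}"

definition sibling :: "nat \<Rightarrow> nat \<Rightarrow> bool" where
  "sibling a b \<longleftrightarrow> (a \<in> D \<and> b \<in> D \<and> par a = par b) \<or> (a \<in> U \<and> b \<in> U)"

definition sib_before :: "nat \<Rightarrow> nat \<Rightarrow> bool" where
  "sib_before a b \<longleftrightarrow> (if a \<in> U then a < b else \<not> sib_gt a b)"

definition branch_before :: "nat \<Rightarrow> nat \<Rightarrow> bool" where
  "branch_before x y \<longleftrightarrow>
     (\<exists>a b. (x, a) \<in> up\<^sup>* \<and> (y, b) \<in> up\<^sup>* \<and> a \<noteq> b \<and> sibling a b \<and> sib_before a b)"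

definition tree_before :: "nat \<Rightarrow> nat \<Rightarrow> bool" where
  "tree_before x y \<longleftrightarrow> (x, y) \<in> up\<^sup>+ \<or> branch_before x y"

definition lin_ext :: "nat set \<Rightarrow> nat list \<Rightarrow> bool" where
  "lin_ext S xs \<longleftrightarrow> distinct xs \<and> set xs = S \<and> (\<forall>x\<in>S. \<not> tree_before x x) \<and>
     (\<forall>x\<in>S. \<forall>y\<in>S. x \<noteq> y \<longrightarrow> (before xs x y \<longleftrightarrow> tree_before x y))"

definition up_closed :: "nat set \<Rightarrow> bool" where
  "up_closed S \<longleftrightarrow> (\<forall>y\<in>S. y \<in> D \<longrightarrow> par y \<in> S)"

lemma up_iff [simp]: "(x, y) \<in> up \<longleftrightarrow> x \<in> D \<and> y = par x"
  by (auto simp: up_def)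

lemma up_rtrancl_D: "x \<in> D \<Longrightarrow> (x, z) \<in> up\<^sup>* \<longleftrightarrow> z = x \<or> (par x, z) \<in> up\<^sup>*"
  by (auto elim: converse_rtranclE intro: converse_rtrancl_into_rtrancl)

lemma up_rtrancl_notD: "x \<notin> D \<Longrightarrow> (x, z) \<in> up\<^sup>* \<longleftrightarrow> z = x"
  by (auto elim: converse_rtranclE)

lemma up_trancl_D: "x \<in> D \<Longrightarrow> (x, z) \<in> up\<^sup>+ \<longleftrightarrow> (par x, z) \<in> up\<^sup>*"
  by (auto elim: converse_tranclE intro: rtrancl_into_trancl2 dest: trancl_into_rtrancl)

lemma up_trancl_notD: "x \<notin> D \<Longrightarrow> (x, z) \<notin> up\<^sup>+"
  by (auto elim: converse_tranclE)

lemma height_trancl: "(x, y) \<in> up\<^sup>+ \<Longrightarrow> height y < height x"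
  by (induction rule: trancl_induct) (use height_par less_trans in auto)

lemma up_rtrancl_height: "(x, y) \<in> up\<^sup>* \<Longrightarrow> x = y \<or> height y < height x"
  by (meson height_trancl rtranclD)

lemma up_acyclic: "(x, x) \<notin> up\<^sup>+"
  using height_trancl by blast

lemma up_closed_rtrancl: "(y, z) \<in> up\<^sup>* \<Longrightarrow> up_closed S \<Longrightarrow> y \<in> S \<Longrightarrow> z \<in> S"
  by (induction rule: rtrancl_induct) (auto simp: up_closed_def)

lemma lin_ext_roots:
  assumes "finite U"
  shows "lin_ext U (sorted_list_of_set U)"
proof -
  have "tree_before x y \<longleftrightarrow> x \<noteq> y \<and> x < y" if "x \<in> U" "y \<in> U" for x y
  proof -
    have "x \<notin> D" "y \<notin> D" using that roots_disjoint by auto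
    then show ?thesis unfolding tree_before_def branch_before_def using that
      by (auto simp: up_rtrancl_notD up_trancl_notD sibling_def sib_before_def)
  qed
  then show ?thesis unfolding lin_ext_def using assms
    by (auto simp: before_sorted strict_sorted_list_of_set)
qed

text \<open>Adding a leaf k whose parent is present and which ranks after all present siblings:
  its position relative to old nodes is that of its parent, except that it precedes the
  parent itself.\<close>
context
  fixes S :: "nat set" and k :: nat
  assumes k_D: "k \<in> D" and k_new: "k \<notin> S" and par_present: "par k \<in> S"
    and closed: "up_closed S"
    and no_descendant: "\<And>y. y \<in> S \<Longrightarrow> (y, k) \<notin> up\<^sup>*"
    and ranked_last: "\<And>b. b \<in> S \<Longrightarrow> b \<in> D \<Longrightarrow> par b = par k \<Longrightarrow> sib_gt k b \<and> \<not> sib_gt b k"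
begin

lemma leaf_up_rtrancl: "(k, z) \<in> up\<^sup>* \<longleftrightarrow> z = k \<or> (par k, z) \<in> up\<^sup>*"
  using up_rtrancl_D[OF k_D] .

lemma leaf_not_U: "k \<notin> U"
  using k_D roots_disjoint by auto

lemma leaf_not_sib_before: "b \<in> S \<Longrightarrow> \<not> (sibling k b \<and> sib_before k b)"
  using ranked_last leaf_not_U by (auto simp: sibling_def sib_before_def)

text \<open>A branch splitting from a present node is one of the parent of k, since k itself is
  ranked after its present siblings.\<close>
lemma branch_before_leaf:
  assumes y: "y \<in> S"
  shows "branch_before k y \<longleftrightarrow> branch_before (par k) y"
proof
  assume "branch_before k y"
  then obtain a b where ab: "(k, a) \<in> up\<^sup>*" "(y, b) \<in> up\<^sup>*" "a \<noteq> b" "sibling a b" "sib_before a b"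
    unfolding branch_before_def by blast
  have "b \<in> S" using up_closed_rtrancl[OF ab(2) closed y] .
  then have "a \<noteq> k" using leaf_not_sib_before ab by blast
  then have "(par k, a) \<in> up\<^sup>*" using ab(1) leaf_up_rtrancl by blast
  then show "branch_before (par k) y" unfolding branch_before_def using ab by blast
next
  assume "branch_before (par k) y"
  then show "branch_before k y"
    unfolding branch_before_def using leaf_up_rtrancl by blast
qed

lemma tree_before_leaf:
  assumes y: "y \<in> S"
  shows "tree_before k y \<longleftrightarrow> y = par k \<or> tree_before (par k) y"
  unfolding tree_before_def
  using up_trancl_D[OF k_D, of y] branch_before_leaf[OF y] rtrancl_eq_or_trancl[of "par k" y up]
  by blast

lemma sibling_of_leaf_iff:
  assumes y: "y \<in> S"
  shows "(\<exists>a. (y, a) \<in> up\<^sup>* \<and> a \<noteq> k \<and> sibling a k \<and> sib_before a k) \<longleftrightarrow> (y, par k) \<in> up\<^sup>+"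
proof
  assume "\<exists>a. (y, a) \<in> up\<^sup>* \<and> a \<noteq> k \<and> sibling a k \<and> sib_before a k"
  then obtain a where "(y, a) \<in> up\<^sup>*" "sibling a k" by blast
  moreover from \<open>sibling a k\<close> have "(a, par k) \<in> up"
    using leaf_not_U by (auto simp: sibling_def)
  ultimately show "(y, par k) \<in> up\<^sup>+" by (meson rtrancl_into_trancl1)
next
  assume "(y, par k) \<in> up\<^sup>+"
  then obtain a where a: "(y, a) \<in> up\<^sup>*" "(a, par k) \<in> up" by (meson tranclD2)
  have a_S: "a \<in> S" using up_closed_rtrancl[OF a(1) closed y] .
  have a_D: "a \<in> D" and same_par: "par a = par k" using a(2) by auto
  have "a \<noteq> k" using a_S k_new by blast
  moreover have "sibling a k" using a_D k_D same_par by (simp add: sibling_def)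
  moreover have "a \<notin> U" using a_D roots_disjoint by blast
  then have "sib_before a k" using ranked_last[OF a_S a_D same_par] by (simp add: sib_before_def)
  ultimately show "\<exists>a. (y, a) \<in> up\<^sup>* \<and> a \<noteq> k \<and> sibling a k \<and> sib_before a k"
    using a(1) by blast
qed

lemma branch_before_to_leaf:
  "branch_before y k \<longleftrightarrow>
     (\<exists>a. (y, a) \<in> up\<^sup>* \<and> a \<noteq> k \<and> sibling a k \<and> sib_before a k) \<or> branch_before y (par k)"
proof
  assume "branch_before y k"
  then obtain a b where ab: "(y, a) \<in> up\<^sup>*" "(k, b) \<in> up\<^sup>*" "a \<noteq> b" "sibling a b" "sib_before a b"
    unfolding branch_before_def by blast
  show "(\<exists>a. (y, a) \<in> up\<^sup>* \<and> a \<noteq> k \<and> sibling a k \<and> sib_before a k) \<or> branch_before y (par k)"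
  proof (cases "b = k")
    case True then show ?thesis using ab by blast
  next
    case False
    then have "(par k, b) \<in> up\<^sup>*" using ab(2) leaf_up_rtrancl by blast
    then show ?thesis unfolding branch_before_def using ab by blast
  qed
next
  assume "(\<exists>a. (y, a) \<in> up\<^sup>* \<and> a \<noteq> k \<and> sibling a k \<and> sib_before a k) \<or> branch_before y (par k)"
  then show "branch_before y k"
    unfolding branch_before_def using leaf_up_rtrancl by blast
qed

lemma tree_before_to_leaf:
  assumes y: "y \<in> S"
  shows "tree_before y k \<longleftrightarrow> tree_before y (par k)"
proof -
  have "(y, k) \<notin> up\<^sup>+" using no_descendant[OF y] by (meson trancl_into_rtrancl)
  then have "tree_before y k \<longleftrightarrow> branch_before y k" by (simp add: tree_before_def)
  also have "\<dots> \<longleftrightarrow> (y, par k) \<in> up\<^sup>+ \<or> branch_before y (par k)"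
    by (subst branch_before_to_leaf) (simp only: sibling_of_leaf_iff[OF y])
  finally show ?thesis by (simp add: tree_before_def)
qed

lemma leaf_irrefl:
  assumes irrefl: "\<forall>x\<in>S. \<not> tree_before x x"
  shows "\<not> tree_before k k"
proof
  assume "tree_before k k"
  then have "branch_before k k" using up_acyclic by (simp add: tree_before_def)
  then consider a where "(k, a) \<in> up\<^sup>*" "a \<noteq> k" "sibling a k" | "branch_before k (par k)"
    using branch_before_to_leaf by blast
  then show False
  proof cases
    case 1
    then have "(par k, a) \<in> up\<^sup>*" "(a, par k) \<in> up"
      using leaf_up_rtrancl leaf_not_U by (auto simp: sibling_def)
    then show False using up_acyclic by (meson rtrancl_into_trancl1)
  next
    case 2
    then have "tree_before (par k) (par k)"
      using branch_before_leaf[OF par_present] by (simp add: tree_before_def)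
    then show False using irrefl par_present by blast
  qed
qed

lemma lin_ext_insert_leaf:
  assumes ext: "lin_ext S xs"
  shows "lin_ext (insert k S) (ins_left [k] (par k) xs) \<and> up_closed (insert k S)"
proof -
  have dist: "distinct xs" and set_xs: "set xs = S" and irrefl: "\<forall>x\<in>S. \<not> tree_before x x"
    and order: "\<And>x y. x \<in> S \<Longrightarrow> y \<in> S \<Longrightarrow> x \<noteq> y \<Longrightarrow> before xs x y \<longleftrightarrow> tree_before x y"
    using ext by (auto simp: lin_ext_def)
  have "par k \<in> set xs" "k \<notin> set xs" using par_present k_new set_xs by auto
  note ins = before_ins_left[OF dist this]
  have "lin_ext (insert k S) (ins_left [k] (par k) xs)"
    unfolding lin_ext_def
  proof (intro conjI ballI impI)
    show "distinct (ins_left [k] (par k) xs)" by (fact ins(1))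
    show "set (ins_left [k] (par k) xs) = insert k S" using ins(2) set_xs by simp
    show "\<not> tree_before x x" if "x \<in> insert k S" for x
      using that leaf_irrefl[OF irrefl] irrefl by auto
    fix x y assume x: "x \<in> insert k S" and y: "y \<in> insert k S" and xy: "x \<noteq> y"
    consider "x = k" "y \<in> S" | "y = k" "x \<in> S" | "x \<in> S" "y \<in> S" "x \<noteq> k" "y \<noteq> k"
      using x y xy by blast
    then show "before (ins_left [k] (par k) xs) x y \<longleftrightarrow> tree_before x y"
    proof cases
      case 1
      then show ?thesis using ins(4)[of y] set_xs tree_before_leaf order[of "par k" y] par_present
        by (cases "y = par k") auto
    next
      case 2
      then show ?thesis using ins(5)[of x] set_xs tree_before_to_leaf order[of x "par k"]
          par_present irrefl before_irrefl[OF dist] by (cases "x = par k") auto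
    next
      case 3
      then show ?thesis using ins(3) order xy by auto
    qed
  qed
  moreover have "up_closed (insert k S)"
    using closed par_present by (auto simp: up_closed_def)
  ultimately show ?thesis by simp
qed

end

end

section \<open>The forest of dots of a permutation tableau\<close>

locale tableau =
  fixes n :: nat and R :: "nat set" and f :: "nat \<Rightarrow> nat \<Rightarrow> bool"
  assumes perm_tableau: "perm_tableau n R f"
begin

abbreviation dots :: "nat set" where "dots \<equiv> dot_labels n R f"

definition roots :: "nat set" where "roots = {i. unrestricted_row n R f i}"

text \<open>The next dot on an alternating path, or, after a black dot of an unrestricted row,
  that row.\<close>
definition par :: "nat \<Rightarrow> nat" where
  "par k = (if k \<in> cols n R then top1 n R f k else rr0 n R f k)"

definition dot_gt :: "nat \<Rightarrow> nat \<Rightarrow> bool" where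
  "dot_gt a b \<longleftrightarrow> fst (dot_pos n R f a) > fst (dot_pos n R f b) \<or>
     (fst (dot_pos n R f a) = fst (dot_pos n R f b) \<and> snd (dot_pos n R f a) < snd (dot_pos n R f b))"

lemma cols_bounds: "j \<in> cols n R \<Longrightarrow> 1 \<le> j \<and> j \<le> n \<and> j \<notin> R"
  by (auto simp: cols_def)

lemma cell_facts: "is_cell n R i j \<Longrightarrow> i \<in> R \<and> j \<in> cols n R \<and> i < j"
  by (simp add: is_cell_def)

lemma top1_spec:
  assumes "j \<in> cols n R"
  shows "topmost1 n R f (top1 n R f j) j"
proof -
  let ?P = "\<lambda>i. is_cell n R i j \<and> f i j"
  obtain i where "?P i" using perm_tableau assms by (auto simp: perm_tableau_def)
  define i0 where "i0 = (LEAST i. ?P i)"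
  have "?P i0" unfolding i0_def by (rule LeastI) fact
  moreover have "\<And>i'. i' < i0 \<Longrightarrow> \<not> ?P i'" unfolding i0_def by (rule not_less_Least)
  ultimately have top: "topmost1 n R f i0 j" by (auto simp: topmost1_def)
  have "\<And>b. topmost1 n R f b j \<Longrightarrow> b = i0"
    using top by (metis linorder_neqE_nat topmost1_def)
  then have "top1 n R f j = i0" unfolding top1_def using top by (rule the_equality[rotated])
  then show ?thesis using top by simp
qed

lemma top1_facts:
  assumes "j \<in> cols n R"
  shows "is_cell n R (top1 n R f j) j" "f (top1 n R f j) j" "top1 n R f j \<in> R"
  using top1_spec[OF assms] cell_facts by (auto simp: topmost1_def)

lemma rr0_eq:
  assumes "rightmost_r0 n R f i j"
  shows "rr0 n R f i = j"
proof -
  have "\<And>b. rightmost_r0 n R f i b \<Longrightarrow> b = j"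
    using assms by (metis linorder_neqE_nat rightmost_r0_def)
  then show ?thesis unfolding rr0_def using assms by (rule the_equality[rotated])
qed

lemma rr0_spec:
  assumes "restricted_row n R f i"
  shows "rightmost_r0 n R f i (rr0 n R f i)"
proof -
  let ?P = "\<lambda>j. restricted0 n R f i j"
  obtain j where "?P j" using assms by (auto simp: restricted_row_def)
  define j0 where "j0 = (LEAST j. ?P j)"
  have "?P j0" unfolding j0_def by (rule LeastI) fact
  moreover have "\<And>j'. j' < j0 \<Longrightarrow> \<not> ?P j'" unfolding j0_def by (rule not_less_Least)
  ultimately have "rightmost_r0 n R f i j0" by (auto simp: rightmost_r0_def)
  then show ?thesis using rr0_eq by simp
qed

lemma rr0_facts:
  assumes "restricted_row n R f i"
  shows "restricted0 n R f i (rr0 n R f i)" "rr0 n R f i \<in> cols n R" "i < rr0 n R f i" "i \<in> R"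
proof -
  show r0: "restricted0 n R f i (rr0 n R f i)"
    using rr0_spec[OF assms] by (simp add: rightmost_r0_def)
  then show "rr0 n R f i \<in> cols n R" "i < rr0 n R f i" "i \<in> R"
    using cell_facts by (auto simp: restricted0_def)
qed

lemma rightmost_r0_iff: "rightmost_r0 n R f i j \<longleftrightarrow> restricted_row n R f i \<and> rr0 n R f i = j"
proof
  assume r: "rightmost_r0 n R f i j"
  then have "restricted_row n R f i"
    using cell_facts by (auto simp: restricted_row_def rightmost_r0_def restricted0_def)
  then show "restricted_row n R f i \<and> rr0 n R f i = j" using rr0_eq[OF r] by simp
qed (use rr0_spec in blast)

text \<open>If the black dot of column j lies in a restricted row, the white dot of that row
  lies to the right of column j: otherwise its 0 would have a 1 to its left (the black
  dot) and a 1 above it, violating the tableau condition.\<close>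
lemma white_right_of_black:
  assumes j: "j \<in> cols n R" and r: "restricted_row n R f (top1 n R f j)"
  shows "j < rr0 n R f (top1 n R f j)"
proof -
  let ?i = "top1 n R f j" and ?j' = "rr0 n R f (top1 n R f j)"
  have r0: "is_cell n R ?i ?j'" "\<not> f ?i ?j'" "\<exists>i'. i' < ?i \<and> is_cell n R i' ?j' \<and> f i' ?j'"
    using rr0_facts(1)[OF r] by (auto simp: restricted0_def)
  have black: "is_cell n R ?i j" "f ?i j" using top1_facts[OF j] by auto
  have "?j' \<noteq> j" using r0 black by auto
  moreover have "\<not> ?j' < j"
    using perm_tableau r0 black unfolding perm_tableau_def by blast
  ultimately show ?thesis by simp
qed

lemma dots_eq: "dots = cols n R \<union> {i. restricted_row n R f i}"
  by (simp add: dot_labels_def)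

lemma roots_R: "i \<in> roots \<Longrightarrow> i \<in> R"
  by (simp add: roots_def unrestricted_row_def)

lemma row_cases: "i \<in> R \<Longrightarrow> restricted_row n R f i \<or> i \<in> roots"
  by (auto simp: roots_def unrestricted_row_def restricted_row_def)

lemma dots_roots_disjoint: "dots \<inter> roots = {}"
  using cols_bounds by (auto simp: dots_eq roots_def unrestricted_row_def restricted_row_def)

lemma row_in_dots: "i \<in> R \<Longrightarrow> i \<in> dots \<longleftrightarrow> restricted_row n R f i"
  using cols_bounds by (auto simp: dots_eq)

lemma par_col: "k \<in> cols n R \<Longrightarrow> par k = top1 n R f k"
  by (simp add: par_def)

lemma par_row: "k \<notin> cols n R \<Longrightarrow> par k = rr0 n R f k"
  by (simp add: par_def)

lemma par_in: "k \<in> dots \<Longrightarrow> par k \<in> dots \<union> roots"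
  using top1_facts rr0_facts row_cases by (auto simp: dots_eq par_def)

text \<open>The dots sharing the parent of a white dot are the white dots of the same column,
  those sharing the parent of a black dot are black dots (in the same row): a column is
  never a row.\<close>
lemma sibling_of_white:
  assumes w: "restricted_row n R f w" and b: "b \<in> dots" "par b = par w"
  shows "restricted_row n R f b \<and> rr0 n R f b = rr0 n R f w"
proof -
  have w_col: "w \<notin> cols n R" using rr0_facts(4)[OF w] cols_bounds by blast
  have "b \<notin> cols n R"
  proof
    assume "b \<in> cols n R"
    then have "par b \<in> R" using top1_facts(3) par_col by simp
    moreover have "par w \<notin> R" using par_row[OF w_col] rr0_facts(2)[OF w] cols_bounds by simp
    ultimately show False using b(2) by simp
  qed
  then show ?thesis using b par_row[OF w_col] par_row dots_eq by auto
qed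

lemma sibling_of_black:
  assumes j: "j \<in> cols n R" and b: "b \<in> dots" "par b = par j"
  shows "b \<in> cols n R"
proof (rule ccontr)
  assume "b \<notin> cols n R"
  then have "par b \<in> cols n R" using b(1) dots_eq par_row rr0_facts(2) by auto
  then show False using b(2) par_col[OF j] top1_facts(3)[OF j] cols_bounds by auto
qed

lemma nxt_eq:
  assumes "k \<in> dots"
  shows "nxt n R f k = (if par k \<in> dots then Some (par k) else None)"
proof (cases "k \<in> cols n R")
  case True
  then show ?thesis using top1_facts(3) row_in_dots by (simp add: nxt_def par_col)
next
  case False
  then have "restricted_row n R f k" using assms dots_eq by auto
  then show ?thesis using False rr0_facts(2) dots_eq by (simp add: nxt_def par_row)
qed

text \<open>A dot k enters the word xi when column k (black dot) or the column of its white dot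
  is processed, columns from right to left, white dots after black dots; this time stamp
  grows along alternating paths.\<close>
definition height :: "nat \<Rightarrow> nat" where
  "height k = (if k \<in> cols n R then 2 * (n + 1 - k)
     else if restricted_row n R f k then 2 * (n + 1 - rr0 n R f k) + 1 else 0)"

lemma height_col: "j \<in> cols n R \<Longrightarrow> height j = 2 * (n + 1 - j)"
  by (simp add: height_def)

lemma height_row:
  assumes "restricted_row n R f i"
  shows "height i = 2 * (n + 1 - rr0 n R f i) + 1"
  using assms rr0_facts(4) cols_bounds by (auto simp: height_def)

lemma height_par:
  assumes "k \<in> dots"
  shows "height (par k) < height k"
proof (cases "k \<in> cols n R")
  case True
  let ?i = "top1 n R f k"
  have i: "?i \<notin> cols n R" using top1_facts(3)[OF True] cols_bounds by auto
  have k: "k \<le> n" using True cols_bounds by auto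
  show ?thesis
  proof (cases "restricted_row n R f ?i")
    case True
    then have "k < rr0 n R f ?i" "rr0 n R f ?i \<le> n"
      using white_right_of_black \<open>k \<in> cols n R\<close> rr0_facts(2) cols_bounds by auto
    then show ?thesis using i k \<open>k \<in> cols n R\<close> True by (simp add: height_def par_col)
  next
    case False
    then show ?thesis using i k \<open>k \<in> cols n R\<close> by (simp add: height_def par_col)
  qed
next
  case False
  then have "restricted_row n R f k" using assms dots_eq by auto
  then show ?thesis using False rr0_facts(2) by (simp add: height_def par_row)
qed

sublocale forest dots roots par dot_gt height
  by unfold_locales (use dots_roots_disjoint height_par in auto)

end

section \<open>Alternating paths are the ancestor chains of the forest\<close>

context tableau
begin

lemma is_alt_path_hd: "is_alt_path n R f k ps \<Longrightarrow> ps = k # tl ps"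
  by (cases ps) (auto simp: is_alt_path_def)

lemma is_alt_path_single: "is_alt_path n R f k [x] \<longleftrightarrow> x = k \<and> nxt n R f k = None"
  by (auto simp: is_alt_path_def)

lemma is_alt_path_Cons2:
  "is_alt_path n R f k (x # y # ps) \<longleftrightarrow>
     x = k \<and> nxt n R f k = Some y \<and> is_alt_path n R f y (y # ps)"
proof -
  have split_first: "(\<forall>m. P m) \<longleftrightarrow> P 0 \<and> (\<forall>m. P (Suc m))" for P :: "nat \<Rightarrow> bool"
    by (metis not0_implies_Suc)
  show ?thesis unfolding is_alt_path_def by (subst split_first) auto
qed

lemma is_alt_path_unique:
  "is_alt_path n R f k ps \<Longrightarrow> is_alt_path n R f k qs \<Longrightarrow> ps = qs"
proof (induction ps arbitrary: k qs)
  case Nil then show ?case by (simp add: is_alt_path_def)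
next
  case (Cons x ps)
  obtain qs' where qs: "qs = k # qs'" using is_alt_path_hd[OF Cons.prems(2)] by blast
  show ?case
  proof (cases ps)
    case Nil
    then show ?thesis using Cons.prems qs
      by (cases qs') (auto simp: is_alt_path_single is_alt_path_Cons2)
  next
    case (Cons y ps')
    then have "nxt n R f k = Some y" "is_alt_path n R f y ps"
      using Cons.prems(1) is_alt_path_Cons2 by auto
    moreover obtain w qs'' where "qs' = w # qs''"
      using Cons.prems(2) \<open>nxt n R f k = Some y\<close> qs is_alt_path_single by (cases qs') auto
    ultimately have "x = k" "is_alt_path n R f y qs'"
      using Cons.prems qs \<open>ps = y # ps'\<close> is_alt_path_Cons2 by auto
    then show ?thesis using Cons.IH \<open>is_alt_path n R f y ps\<close> qs by simp
  qed
qed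

lemma alt_path_eq: "is_alt_path n R f k ps \<Longrightarrow> alt_path n R f k = ps"
  unfolding alt_path_def using is_alt_path_unique by blast

lemma alt_path_rec:
  assumes "k \<in> dots"
  shows "alt_path n R f k = (if par k \<in> dots then k # alt_path n R f (par k) else [k])"
proof -
  have "is_alt_path n R f k (if par k \<in> dots then k # alt_path n R f (par k) else [k])"
    using assms
  proof (induction k rule: measure_induct_rule[where f = height])
    case (less k)
    show ?case
    proof (cases "par k \<in> dots")
      case True
      then have "is_alt_path n R f (par k)
          (if par (par k) \<in> dots then par k # alt_path n R f (par (par k)) else [par k])"
        using less height_par by blast
      then have path: "is_alt_path n R f (par k) (alt_path n R f (par k))"
        using alt_path_eq by metis
      then have hd: "alt_path n R f (par k) = par k # tl (alt_path n R f (par k))"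
        by (rule is_alt_path_hd)
      have "is_alt_path n R f (par k) (par k # tl (alt_path n R f (par k)))"
        using path by (simp only: hd[symmetric])
      moreover have "nxt n R f k = Some (par k)" using nxt_eq[OF less.prems] True by simp
      ultimately have "is_alt_path n R f k (k # par k # tl (alt_path n R f (par k)))"
        by (simp add: is_alt_path_Cons2)
      then show ?thesis using True by (simp only: if_True) (subst hd, assumption)
    next
      case False
      then show ?thesis using nxt_eq[OF less.prems] is_alt_path_single by simp
    qed
  qed
  then show ?thesis by (rule alt_path_eq)
qed

lemma alt_path_hd: "k \<in> dots \<Longrightarrow> k \<in> set (alt_path n R f k)"
  using alt_path_rec[of k] by (cases "par k \<in> dots") simp_all

lemma set_alt_path: "k \<in> dots \<Longrightarrow> set (alt_path n R f k) = {z. (k, z) \<in> up\<^sup>*} \<inter> dots"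
proof (induction k rule: measure_induct_rule[where f = height])
  case (less k)
  show ?case
  proof (cases "par k \<in> dots")
    case True
    then have "set (alt_path n R f (par k)) = {z. (par k, z) \<in> up\<^sup>*} \<inter> dots"
      using less height_par by blast
    then show ?thesis using alt_path_rec[OF less.prems] True up_rtrancl_D less.prems by auto
  next
    case False
    then show ?thesis
      using alt_path_rec[OF less.prems] up_rtrancl_D up_rtrancl_notD[OF False] less.prems by auto
  qed
qed

lemma alt_path_parent:
  "k \<in> dots \<Longrightarrow> alt_path n R f k = xs @ z # zs \<Longrightarrow> xs \<noteq> [] \<Longrightarrow> z = par (last xs)"
proof (induction xs arbitrary: k)
  case Nil then show ?case by simp
next
  case (Cons x xs)
  have "par k \<in> dots" and path: "alt_path n R f (par k) = xs @ z # zs" and "x = k"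
    using Cons.prems(2) alt_path_rec[OF Cons.prems(1)] by (auto split: if_splits)
  show ?case
  proof (cases xs)
    case Nil
    then show ?thesis using path alt_path_rec[OF \<open>par k \<in> dots\<close>] \<open>x = k\<close> by (auto split: if_splits)
  next
    case (Cons y ys)
    then show ?thesis using Cons.IH[OF \<open>par k \<in> dots\<close> path] by simp
  qed
qed

lemma alt_path_end:
  assumes "k \<in> dots"
  shows "last (alt_path n R f k) \<in> cols n R \<and> par (last (alt_path n R f k)) \<in> roots"
proof -
  have "last (alt_path n R f k) \<in> dots \<and> par (last (alt_path n R f k)) \<notin> dots"
    using assms
  proof (induction k rule: measure_induct_rule[where f = height])
    case (less k)
    show ?case
    proof (cases "par k \<in> dots")
      case True
      then have "last (alt_path n R f k) = last (alt_path n R f (par k))"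
        using alt_path_rec[OF less.prems] alt_path_hd[OF True] by auto
      then show ?thesis using less.IH height_par[OF less.prems] True by simp
    next
      case False
      then show ?thesis using alt_path_rec[OF less.prems] less.prems by simp
    qed
  qed
  then show ?thesis
    using par_in rr0_facts(2) dots_eq by (auto simp: par_row)
qed

section \<open>Comparing paths is comparing branching siblings\<close>

text \<open>If neither path contains the other, the last dots a, b of P_i, P_j before their
  common final segment are distinct siblings: they have the same parent (the first dot of
  the common segment), or both paths end at black dots of two unrestricted rows.\<close>
lemma path_divergence:
  assumes i: "i \<in> dots" and j: "j \<in> dots"
    and not_ij: "i \<notin> set (alt_path n R f j)" and not_ji: "j \<notin> set (alt_path n R f i)"
  obtains a b where "(i, a) \<in> up\<^sup>*" "(j, b) \<in> up\<^sup>*" "a \<noteq> b" "a \<in> dots" "b \<in> dots"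
    "path_greater n R f i j \<longleftrightarrow> dot_gt a b"
    "par a = par b \<or> (a \<in> cols n R \<and> b \<in> cols n R \<and> par a \<in> roots \<and> par b \<in> roots)"
proof -
  define pa where "pa = alt_path n R f i"
  define pb where "pb = alt_path n R f j"
  obtain xs ys zs where pa: "pa = xs @ zs" and pb: "pb = ys @ zs"
    and common: "common_suffix_len pa pb = length zs"
    and differ: "xs \<noteq> [] \<Longrightarrow> ys \<noteq> [] \<Longrightarrow> last xs \<noteq> last ys"
    using common_suffix_split[of pa pb] by blast
  have "xs \<noteq> []"
    using pa pb not_ij alt_path_hd[OF i] by (auto simp: pa_def pb_def)
  moreover have "ys \<noteq> []"
    using pa pb not_ji alt_path_hd[OF j] by (auto simp: pa_def pb_def)
  ultimately have a_in: "last xs \<in> set pa" and b_in: "last ys \<in> set pb"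
    and ab: "last xs \<noteq> last ys" using pa pb differ by auto
  have "take (length pa - common_suffix_len pa pb) pa = xs"
    "take (length pb - common_suffix_len pa pb) pb = ys" using pa pb common by simp_all
  then have greater: "path_greater n R f i j \<longleftrightarrow> dot_gt (last xs) (last ys)"
    unfolding path_greater_def dot_gt_def Let_def pa_def[symmetric] pb_def[symmetric] by simp
  have siblings: "par (last xs) = par (last ys) \<or> (last xs \<in> cols n R \<and> last ys \<in> cols n R \<and>
      par (last xs) \<in> roots \<and> par (last ys) \<in> roots)"
  proof (cases zs)
    case Nil
    then show ?thesis using pa pb alt_path_end[OF i] alt_path_end[OF j] by (simp add: pa_def pb_def)
  next
    case (Cons z zs')
    then show ?thesis using pa pb alt_path_parent[OF i] alt_path_parent[OF j]
      \<open>xs \<noteq> []\<close> \<open>ys \<noteq> []\<close> by (metis pa_def pb_def)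
  qed
  show ?thesis
    using that[OF _ _ ab _ _ greater siblings] a_in b_in set_alt_path[OF i] set_alt_path[OF j]
    by (auto simp: pa_def pb_def)
qed

lemma dot_gt_asym: "dot_gt a b \<Longrightarrow> \<not> dot_gt b a"
  by (auto simp: dot_gt_def)

lemma dot_pos_col: "a \<in> cols n R \<Longrightarrow> dot_pos n R f a = (par a, a)"
  by (simp add: dot_pos_def par_col)

lemma path_order_tree_before:
  assumes i: "i \<in> dots" and j: "j \<in> dots"
    and not_ij: "i \<notin> set (alt_path n R f j)" and not_ji: "j \<notin> set (alt_path n R f i)"
  shows "(\<not> path_greater n R f i j \<longrightarrow> tree_before i j) \<and>
         (path_greater n R f i j \<longrightarrow> tree_before j i)"
proof -
  obtain a b where ia: "(i, a) \<in> up\<^sup>*" and jb: "(j, b) \<in> up\<^sup>*" and ab: "a \<noteq> b"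
    and a: "a \<in> dots" and b: "b \<in> dots" and greater: "path_greater n R f i j \<longleftrightarrow> dot_gt a b"
    and siblings: "par a = par b \<or>
      (a \<in> cols n R \<and> b \<in> cols n R \<and> par a \<in> roots \<and> par b \<in> roots)"
    using path_divergence[OF assms] by blast
  have not_roots: "a \<notin> roots" "b \<notin> roots" using a b dots_roots_disjoint by auto
  show ?thesis
  proof (cases "par a = par b")
    case True
    then have "sibling a b" "sibling b a" using a b by (auto simp: sibling_def)
    moreover have "\<not> path_greater n R f i j \<longrightarrow> sib_before a b"
      "path_greater n R f i j \<longrightarrow> sib_before b a"
      using greater not_roots dot_gt_asym by (auto simp: sib_before_def)
    ultimately show ?thesis
      unfolding tree_before_def branch_before_def using ia jb ab by blast
  next
    case False
    then have cols: "a \<in> cols n R" "b \<in> cols n R" and roots: "par a \<in> roots" "par b \<in> roots"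
      using siblings by auto
    have "(i, par a) \<in> up\<^sup>*" "(j, par b) \<in> up\<^sup>*"
      using ia jb a b by (meson up_iff rtrancl.rtrancl_into_rtrancl)+
    moreover have "sibling (par a) (par b)" "sibling (par b) (par a)"
      using roots by (auto simp: sibling_def)
    moreover have "dot_gt a b \<longleftrightarrow> par a > par b"
      using cols False by (auto simp: dot_gt_def dot_pos_col)
    then have "\<not> path_greater n R f i j \<longrightarrow> sib_before (par a) (par b)"
      "path_greater n R f i j \<longrightarrow> sib_before (par b) (par a)"
      using greater roots False by (auto simp: sib_before_def)
    ultimately show ?thesis
      unfolding tree_before_def branch_before_def using False by metis
  qed
qed

section \<open>The word xi is a linear extension of the tree order\<close>

text \<open>The labels present in the word once the columns with labels greater than c have
  been processed: the unrestricted rows, those columns, and the rows whose white dot lies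
  in one of those columns.\<close>
definition processed :: "nat \<Rightarrow> nat set" where
  "processed c = roots \<union> {j \<in> cols n R. c < j} \<union> {i. restricted_row n R f i \<and> c < rr0 n R f i}"

definition white_rows :: "nat \<Rightarrow> nat set" where
  "white_rows j = {i. rightmost_r0 n R f i j}"

lemma white_rows_iff: "i \<in> white_rows j \<longleftrightarrow> restricted_row n R f i \<and> rr0 n R f i = j"
  by (simp add: white_rows_def rightmost_r0_iff)

lemma finite_white_rows: "finite (white_rows j)"
  by (rule finite_subset[of _ "{..<j}"]) (auto simp: white_rows_iff dest: rr0_facts(3))

lemma xi_step_insertions:
  assumes j: "j \<in> cols n R"
  shows "xi_step n R f xs j =
    foldl (\<lambda>xs w. ins_left [w] j xs) (ins_left [j] (par j) xs) (sorted_list_of_set (white_rows j))"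
proof -
  have "j \<notin> set (sorted_list_of_set (white_rows j))"
    using finite_white_rows rr0_facts(3) by (fastforce simp: white_rows_iff)
  then show ?thesis
    unfolding xi_step_def Let_def par_col[OF j] white_rows_def[symmetric] by (rule ins_left_foldl)
qed

lemma processed_pred:
  assumes j: "j \<in> cols n R"
  shows "processed (j - 1) = insert j (processed j) \<union> white_rows j"
proof -
  have "1 \<le> j" using j cols_bounds by auto
  then show ?thesis using j by (auto simp: processed_def white_rows_iff)
qed

lemma height_processed:
  assumes j: "j \<in> cols n R" and y: "y \<in> processed j"
  shows "height y < height j"
proof -
  have jn: "1 \<le> j" "j \<le> n" using j cols_bounds by auto
  consider "y \<in> roots" | "y \<in> cols n R" "j < y" | "restricted_row n R f y" "j < rr0 n R f y"
    using y by (auto simp: processed_def)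
  then show ?thesis
  proof cases
    case 1
    then have "y \<notin> cols n R" using roots_R cols_bounds by blast
    moreover have "\<not> restricted_row n R f y"
      using 1 by (simp add: roots_def unrestricted_row_def restricted_row_def)
    ultimately show ?thesis using j jn by (simp add: height_def)
  next
    case 2
    then have "y \<le> n" using cols_bounds by blast
    then show ?thesis using 2 j jn by (simp add: height_col)
  next
    case 3
    then have "rr0 n R f y \<le> n" using rr0_facts(2) cols_bounds by blast
    then show ?thesis using 3 j jn by (simp add: height_col height_row)
  qed
qed

lemma up_closed_processed: "up_closed (processed c)"
  unfolding up_closed_def
proof (intro ballI impI)
  fix y assume y: "y \<in> processed c" and y_dot: "y \<in> dots"
  show "par y \<in> processed c"
  proof (cases "y \<in> cols n R")
    case True
    have "y \<notin> roots" "\<not> restricted_row n R f y"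
      using y_dot dots_roots_disjoint True cols_bounds restricted_row_def by blast+
    then have "c < y" using y by (simp add: processed_def)
    have "par y \<in> R" using top1_facts(3)[OF True] par_col[OF True] by simp
    then consider "par y \<in> roots" | "restricted_row n R f (par y)" using row_cases by blast
    then show ?thesis
    proof cases
      case 2
      then have "y < rr0 n R f (par y)" using white_right_of_black[OF True] par_col[OF True] by simp
      then show ?thesis using 2 \<open>c < y\<close> by (simp add: processed_def)
    qed (simp add: processed_def)
  next
    case False
    then have "restricted_row n R f y" "c < rr0 n R f y"
      using y y_dot dots_eq dots_roots_disjoint by (auto simp: processed_def)
    then show ?thesis using rr0_facts(2) by (simp add: processed_def par_row[OF False])
  qed
qed

lemma height_below_white:
  assumes j: "j \<in> cols n R" and w: "w \<in> white_rows j"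
    and y: "y \<in> insert j (processed j) \<union> white_rows j"
  shows "height y \<le> height w"
proof -
  have w_row: "restricted_row n R f w" "rr0 n R f w = j" using w white_rows_iff by auto
  have height_w: "height w = Suc (height j)"
    using height_col[OF j] height_row[OF w_row(1)] w_row(2) by simp
  consider "y \<in> processed j" | "y = j" | "y \<in> white_rows j" using y by blast
  then show ?thesis
  proof cases
    case 1
    then show ?thesis using height_processed[OF j] height_w by fastforce
  next
    case 2
    then show ?thesis using height_w by simp
  next
    case 3
    then have "restricted_row n R f y" "rr0 n R f y = j" using white_rows_iff by auto
    then show ?thesis using height_row w_row by simp
  qed
qed

text \<open>Inserting a white dot w of column j left of j, when the white dots A of column j
  in higher rows are already present.  Since w lies below them, it ranks after these
  siblings; all present labels entered the word earlier, so none descends from w.\<close>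
lemma lin_ext_insert_white:
  assumes j: "j \<in> cols n R" and w_white: "w \<in> white_rows j"
    and A: "A \<subseteq> white_rows j" "\<forall>a\<in>A. a < w"
    and ext: "lin_ext (insert j (processed j) \<union> A) xs"
    and closed: "up_closed (insert j (processed j) \<union> A)"
  shows "lin_ext (insert j (processed j) \<union> insert w A) (ins_left [w] j xs) \<and>
    up_closed (insert j (processed j) \<union> insert w A)"
proof -
  let ?S = "insert j (processed j) \<union> A"
  have w: "restricted_row n R f w" "rr0 n R f w = j" using w_white white_rows_iff by auto
  have w_col: "w \<notin> cols n R" using rr0_facts(4)[OF w(1)] cols_bounds by blast
  have w_dot: "w \<in> dots" and par_w: "par w = j" using w w_col dots_eq par_row by auto
  have "w \<notin> A" using A(2) by auto
  moreover have "w \<notin> roots" using w(1) by (simp add: roots_def unrestricted_row_def restricted_row_def)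
  ultimately have w_new: "w \<notin> ?S"
    using w w_col j by (auto simp: processed_def)
  have "height y \<le> height w" if "y \<in> ?S" for y
    using height_below_white[OF j w_white] that A(1) by blast
  then have no_descendant: "(y, w) \<notin> up\<^sup>*" if "y \<in> ?S" for y
    using that w_new up_rtrancl_height by fastforce
  have ranked_last: "dot_gt w b \<and> \<not> dot_gt b w"
    if b: "b \<in> ?S" "b \<in> dots" "par b = par w" for b
  proof -
    have b_row: "restricted_row n R f b" "rr0 n R f b = j"
      using sibling_of_white[OF w(1) b(2,3)] w(2) by auto
    then have b_not: "b \<notin> cols n R" "b \<notin> roots"
      using rr0_facts(4) cols_bounds by (auto simp: roots_def unrestricted_row_def restricted_row_def)
    then have "b \<in> A" using b(1) b_row j by (auto simp: processed_def)
    then have "b < w" using A(2) by auto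
    then show ?thesis using b_not(1) w_col by (auto simp: dot_gt_def dot_pos_def)
  qed
  have "insert w ?S = insert j (processed j) \<union> insert w A" by blast
  then show ?thesis
    using lin_ext_insert_leaf[OF w_dot w_new _ closed no_descendant ranked_last ext] par_w by simp
qed

lemma lin_ext_white_rows:
  assumes j: "j \<in> cols n R"
  shows "sorted_wrt (<) ws \<Longrightarrow> set ws \<union> A = white_rows j \<Longrightarrow> (\<forall>a\<in>A. \<forall>w\<in>set ws. a < w) \<Longrightarrow>
    lin_ext (insert j (processed j) \<union> A) xs \<Longrightarrow> up_closed (insert j (processed j) \<union> A) \<Longrightarrow>
    lin_ext (insert j (processed j) \<union> white_rows j) (foldl (\<lambda>xs w. ins_left [w] j xs) xs ws)
    \<and> up_closed (insert j (processed j) \<union> white_rows j)"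
proof (induction ws arbitrary: A xs)
  case Nil then show ?case by simp
next
  case (Cons w ws)
  have "w \<in> white_rows j" "A \<subseteq> white_rows j" "\<forall>a\<in>A. a < w" using Cons.prems(2,3) by auto
  then have "lin_ext (insert j (processed j) \<union> insert w A) (ins_left [w] j xs) \<and>
      up_closed (insert j (processed j) \<union> insert w A)"
    using lin_ext_insert_white[OF j] Cons.prems(4,5) by blast
  then show ?case
    using Cons.IH[of "insert w A" "ins_left [w] j xs"] Cons.prems(1-3) by auto
qed

text \<open>The black dot lies left of the columns processed before, i.e. of its present
  siblings in the same row, so it ranks after them.\<close>
lemma lin_ext_column_step:
  assumes j: "j \<in> cols n R" and ext: "lin_ext (processed j) xs"
  shows "lin_ext (processed (j - 1)) (xi_step n R f xs j)"
proof -
  let ?t = "top1 n R f j"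
  have j_dot: "j \<in> dots" and par_j: "par j = ?t" using j dots_eq par_col by auto
  have "j \<notin> R" using j cols_bounds by blast
  then have j_new: "j \<notin> processed j"
    using roots_R by (auto simp: processed_def restricted_row_def)
  have t_present: "?t \<in> processed j"
    using row_cases[OF top1_facts(3)[OF j]] white_right_of_black[OF j] by (auto simp: processed_def)
  have no_descendant: "(y, j) \<notin> up\<^sup>*" if "y \<in> processed j" for y
    using that j_new height_processed[OF j] up_rtrancl_height by fastforce
  have ranked_last: "dot_gt j b \<and> \<not> dot_gt b j"
    if b: "b \<in> processed j" "b \<in> dots" "par b = par j" for b
  proof -
    have b_col: "b \<in> cols n R" using sibling_of_black[OF j b(2,3)] .
    have "b \<notin> roots" "\<not> restricted_row n R f b"
      using b(2) b_col dots_roots_disjoint cols_bounds restricted_row_def by blast+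
    then have "j < b" using b(1) b_col by (simp add: processed_def)
    then show ?thesis using b_col j b(3) by (auto simp: dot_gt_def dot_pos_col)
  qed
  have "lin_ext (insert j (processed j)) (ins_left [j] (par j) xs) \<and>
      up_closed (insert j (processed j))"
    using lin_ext_insert_leaf[OF j_dot j_new _ up_closed_processed no_descendant ranked_last ext]
      t_present par_j by simp
  then show ?thesis
    unfolding xi_step_insertions[OF j] processed_pred[OF j]
    using lin_ext_white_rows[OF j, of "sorted_list_of_set (white_rows j)" "{}"] finite_white_rows
    by (simp add: strict_sorted_list_of_set)
qed

text \<open>Since white dots lie in columns, processed c depends only on which columns exceed c.\<close>
lemma processed_cong:
  assumes "\<And>j. j \<in> cols n R \<Longrightarrow> c < j \<longleftrightarrow> c' < j"
  shows "processed c = processed c'"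
  using assms rr0_facts(2) by (auto simp: processed_def)

lemma lin_ext_columns:
  "sorted_wrt (>) cs \<Longrightarrow> set cs = {j \<in> cols n R. j \<le> c} \<Longrightarrow> lin_ext (processed c) xs \<Longrightarrow>
   lin_ext (processed 0) (foldl (xi_step n R f) xs cs)"
proof (induction cs arbitrary: c xs)
  case Nil
  have "c < x \<and> 0 < x" if x: "x \<in> cols n R" for x
  proof -
    have "x \<notin> {j \<in> cols n R. j \<le> c}" using Nil.prems(2) by simp
    then show ?thesis using x cols_bounds[OF x] by simp
  qed
  then have "processed c = processed 0" by (intro processed_cong) blast
  then show ?case using Nil.prems(3) by simp
next
  case (Cons j cs)
  note peel = decreasing_Cons[OF Cons.prems(1,2)]
  have "processed c = processed j" by (rule processed_cong) (rule peel(3))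
  then have "lin_ext (processed (j - 1)) (xi_step n R f xs j)"
    using lin_ext_column_step[OF peel(1)] Cons.prems(3) by simp
  moreover have "1 \<le> j" using cols_bounds[OF peel(1)] by simp
  then have "set cs = {x \<in> cols n R. x \<le> j - 1}"
    unfolding peel(2) by (intro Collect_cong) auto
  ultimately show ?case using Cons.IH Cons.prems(1) by simp
qed

lemma lin_ext_xi: "lin_ext (dots \<union> roots) (xi n R f)"
proof -
  have "R \<subseteq> {1..n}" using perm_tableau by (simp add: perm_tableau_def)
  then have "roots \<subseteq> {1..n}" using roots_R by blast
  then have "finite roots" by (rule finite_subset) simp
  have col_range: "0 < j \<and> \<not> n < j" if "j \<in> cols n R" for j
    using that by (simp add: cols_def)
  have "processed n = roots"
    using col_range rr0_facts(2) by (auto simp: processed_def)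
  with \<open>finite roots\<close> have start: "lin_ext (processed n) (sorted_list_of_set roots)"
    by (simp add: lin_ext_roots)
  have "{j \<in> cols n R. 0 < j} = cols n R" using col_range by blast
  moreover have "{i. restricted_row n R f i \<and> 0 < rr0 n R f i} = {i. restricted_row n R f i}"
    using col_range rr0_facts(2) by blast
  ultimately have finish: "processed 0 = dots \<union> roots"
    unfolding processed_def dots_eq by blast
  have "set (rev (sorted_list_of_set (cols n R))) = {j \<in> cols n R. j \<le> n}"
    by (auto simp: cols_def)
  moreover have "sorted_wrt (>) (rev (sorted_list_of_set (cols n R)))"
    by (simp add: sorted_wrt_rev strict_sorted_list_of_set)
  ultimately have "lin_ext (processed 0)
      (foldl (xi_step n R f) (sorted_list_of_set roots) (rev (sorted_list_of_set (cols n R))))"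
    using lin_ext_columns start by blast
  then show ?thesis unfolding xi_def roots_def[symmetric] finish .
qed

lemma xi_order:
  assumes i: "i \<in> dots" and j: "j \<in> dots" and ij: "i \<noteq> j"
  shows "before (xi n R f) i j \<longleftrightarrow> path_less n R f i j \<or> j \<in> set (alt_path n R f i)"
proof -
  have dist: "distinct (xi n R f)"
    and order: "\<And>x y. x \<in> dots \<Longrightarrow> y \<in> dots \<Longrightarrow> x \<noteq> y \<Longrightarrow> before (xi n R f) x y \<longleftrightarrow> tree_before x y"
    using lin_ext_xi unfolding lin_ext_def by blast+
  have ancestor: "tree_before x y" if "x \<in> dots" "y \<in> set (alt_path n R f x)" "x \<noteq> y" for x y
    using that set_alt_path by (auto simp: tree_before_def dest: rtranclD)
  have "tree_before i j" if "path_less n R f i j \<or> j \<in> set (alt_path n R f i)"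
    using that ancestor[OF i] ij path_order_tree_before[OF i j] by (auto simp: path_less_def)
  moreover have "tree_before j i" if "\<not> (path_less n R f i j \<or> j \<in> set (alt_path n R f i))"
    using that ancestor[OF j] ij path_order_tree_before[OF i j] by (auto simp: path_less_def)
  ultimately show ?thesis
    using order[OF i j ij] order[OF j i] ij before_antisym[OF dist] by blast
qed

end

theorem lemma2p5:
  fixes n :: nat and R :: "nat set" and f :: "nat \<Rightarrow> nat \<Rightarrow> bool" and i j :: nat
  assumes "perm_tableau n R f"
    and "i \<in> dot_labels n R f" and "j \<in> dot_labels n R f" and "i \<noteq> j"
  shows "(\<exists>us vs ws. xi n R f = us @ i # vs @ j # ws) \<longleftrightarrow>
         (path_less n R f i j \<or> j \<in> set (alt_path n R f i))"
proof -
  interpret tableau n R f by unfold_locales (rule assms(1))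
  show ?thesis using xi_order[OF assms(2-4)] by (simp add: before_def)
qed

end
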